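(* If $G$ is a connected edge-transitive graph, then for every edge $\{a,b\}$ of $G$ the eigenvalue support of $e_a-e_b$ consists of all the non-zero Laplacian eigenvalues of $G$.
   Context: Let $L=\Delta-A$ be the Laplacian of $G$ with spectral decomposition $L=\sum_r\theta_rE_r$ ($\theta_r$ distinct eigenvalues, $E_r$ orthogonal projections onto eigenspaces). The eigenvalue support of a vector $x$ is the set of $\theta_r$ with $E_rx\neq0$. *)

theory Defs
  imports "HOL-Analysis.Analysis"
begin

definition simple_graph :: "('n \<Rightarrow> 'n \<Rightarrow> bool) \<Rightarrow> bool" where
  "simple_graph E \<longleftrightarrow> (\<forall>x y. E x y \<longrightarrow> E y x) \<and> (\<forall>x. \<not> E x x)"

definition graph_connected :: "('n \<Rightarrow> 'n \<Rightarrow> bool) \<Rightarrow> bool" where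
  "graph_connected E \<longleftrightarrow> (\<forall>x y. E\<^sup>*\<^sup>* x y)"

definition graph_automorphism :: "('n \<Rightarrow> 'n \<Rightarrow> bool) \<Rightarrow> ('n \<Rightarrow> 'n) \<Rightarrow> bool" where
  "graph_automorphism E \<sigma> \<longleftrightarrow> bij \<sigma> \<and> (\<forall>x y. E x y \<longleftrightarrow> E (\<sigma> x) (\<sigma> y))"

definition edge_transitive :: "('n \<Rightarrow> 'n \<Rightarrow> bool) \<Rightarrow> bool" where
  "edge_transitive E \<longleftrightarrow>
     (\<forall>a b c d. E a b \<longrightarrow> E c d \<longrightarrow>
        (\<exists>\<sigma>. graph_automorphism E \<sigma> \<and> \<sigma> ` {a, b} = {c, d}))"

definition degree :: "('n::finite \<Rightarrow> 'n \<Rightarrow> bool) \<Rightarrow> 'n \<Rightarrow> nat" where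
  "degree E x = card {y. E x y}"

definition adjacency_matrix :: "('n::finite \<Rightarrow> 'n \<Rightarrow> bool) \<Rightarrow> real^'n^'n" where
  "adjacency_matrix E = (\<chi> i j. if E i j then 1 else 0)"

definition degree_matrix :: "('n::finite \<Rightarrow> 'n \<Rightarrow> bool) \<Rightarrow> real^'n^'n" where
  "degree_matrix E = (\<chi> i j. if i = j then real (degree E i) else 0)"

definition laplacian :: "('n::finite \<Rightarrow> 'n \<Rightarrow> bool) \<Rightarrow> real^'n^'n" where
  "laplacian E = degree_matrix E - adjacency_matrix E"

definition is_eigenvalue :: "real^'n^'n \<Rightarrow> real \<Rightarrow> bool" where
  "is_eigenvalue M \<theta> \<longleftrightarrow> (\<exists>v. v \<noteq> 0 \<and> M *v v = \<theta> *\<^sub>R v)"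

definition eigenspace :: "real^'n^'n \<Rightarrow> real \<Rightarrow> (real^'n) set" where
  "eigenspace M \<theta> = {v. M *v v = \<theta> *\<^sub>R v}"

definition orth_proj :: "(real^'n) set \<Rightarrow> real^'n \<Rightarrow> real^'n" where
  "orth_proj S x = (THE p. p \<in> S \<and> (\<forall>v\<in>S. inner (x - p) v = 0))"

definition eigenvalue_support :: "real^'n^'n \<Rightarrow> real^'n \<Rightarrow> real set" where
  "eigenvalue_support M x = {\<theta>. is_eigenvalue M \<theta> \<and> orth_proj (eigenspace M \<theta>) x \<noteq> 0}"

end

theory Submission
  imports Defs
begin

text \<open>The component of \<open>e\<^sub>a - e\<^sub>b\<close> in an eigenspace vanishes exactly when every eigenvector
  in it takes the same value at \<open>a\<close> and \<open>b\<close>. The kernel of the Laplacian consists of vectors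
  constant along edges (quadratic form), so \<open>0\<close> is never in the support. Conversely, an
  eigenvector for \<open>\<theta> \<noteq> 0\<close> is not constant along some edge; an automorphism moving that
  edge onto \<open>{a, b}\<close> permutes it into an eigenvector for \<open>\<theta>\<close> separating \<open>a\<close> and \<open>b\<close>.\<close>

lemma subspace_eigenspace: "subspace (eigenspace M \<theta>)"
  unfolding subspace_def eigenspace_def
  by (auto simp: matrix_vector_right_distrib matrix_vector_mult_scaleR scaleR_add_right)

lemma orth_proj_eqI:
  assumes S: "subspace S" and "p \<in> S" and orth: "\<forall>v\<in>S. inner (x - p) v = 0"
  shows "orth_proj S x = p"
  unfolding orth_proj_def
proof (rule the_equality)
  show "p \<in> S \<and> (\<forall>v\<in>S. inner (x - p) v = 0)" using assms by blast
next
  fix q assume q: "q \<in> S \<and> (\<forall>v\<in>S. inner (x - q) v = 0)"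
  then have "p - q \<in> S" using S \<open>p \<in> S\<close> by (simp add: subspace_diff)
  then have "inner (p - q) (p - q) = inner (x - q) (p - q) - inner (x - p) (p - q)"
    by (simp add: inner_diff_left)
  also have "\<dots> = 0" using q orth \<open>p - q \<in> S\<close> by simp
  finally show "q = p" by simp
qed

lemma orth_proj_eq_0_iff:
  assumes S: "subspace S"
  shows "orth_proj S x = 0 \<longleftrightarrow> (\<forall>v\<in>S. inner x v = 0)"
proof
  obtain y z where y: "y \<in> span S" and z: "\<And>w. w \<in> span S \<Longrightarrow> orthogonal z w"
    and x: "x = y + z"
    using orthogonal_subspace_decomp_exists by blast
  have "y \<in> S" using y S by (metis span_eq_iff)
  moreover have orth: "\<forall>v\<in>S. inner (x - y) v = 0"
    using z x by (auto simp: orthogonal_def span_base)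
  ultimately have "orth_proj S x = y" by (rule orth_proj_eqI[OF S])
  moreover assume "orth_proj S x = 0"
  ultimately show "\<forall>v\<in>S. inner x v = 0" using orth by simp
next
  assume "\<forall>v\<in>S. inner x v = 0"
  then show "orth_proj S x = 0" by (simp add: orth_proj_eqI[OF S subspace_0[OF S]])
qed

lemma eigenvalue_support_axis_diff:
  "eigenvalue_support M (axis a 1 - axis b 1) =
     {\<theta>. is_eigenvalue M \<theta> \<and> (\<exists>v\<in>eigenspace M \<theta>. v $ a \<noteq> v $ b)}"
  by (auto simp: eigenvalue_support_def orth_proj_eq_0_iff[OF subspace_eigenspace]
      inner_diff_left inner_axis')

lemma laplacian_mult_vec_nth:
  "(laplacian E *v v) $ i = (\<Sum>j\<in>UNIV. if E i j then v $ i - v $ j else 0)"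
proof -
  have "(laplacian E *v v) $ i = (\<Sum>j\<in>UNIV. (if i = j then real (degree E i) else 0) * v $ j)
      - (\<Sum>j\<in>UNIV. (if E i j then 1 else 0) * v $ j)"
    by (simp add: laplacian_def matrix_vector_mult_def degree_matrix_def adjacency_matrix_def
        left_diff_distrib sum_subtractf)
  also have "(\<Sum>j\<in>UNIV. (if i = j then real (degree E i) else 0) * v $ j) =
      (\<Sum>j\<in>UNIV. if i = j then real (degree E i) * v $ j else 0)"
    by (rule sum.cong) auto
  also have "\<dots> = (\<Sum>j | E i j. v $ i)"
    by (simp add: degree_def)
  also have "(\<Sum>j\<in>UNIV. (if E i j then 1 else 0) * v $ j) =
      (\<Sum>j\<in>UNIV. if E i j then v $ j else 0)"
    by (rule sum.cong) auto
  also have "\<dots> = (\<Sum>j | E i j. v $ j)"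
    by (simp add: sum.If_cases)
  finally show ?thesis
    by (simp add: sum_subtractf sum.If_cases)
qed

lemma laplacian_quadratic_form:
  assumes "symp E"
  shows "2 * inner v (laplacian E *v v) =
           (\<Sum>c\<in>UNIV. \<Sum>d\<in>UNIV. if E c d then (v $ c - v $ d)\<^sup>2 else 0)"
proof -
  let ?S = "\<lambda>c d. if E c d then v $ c * (v $ c - v $ d) else 0"
  have form: "inner v (laplacian E *v v) = (\<Sum>c\<in>UNIV. \<Sum>d\<in>UNIV. ?S c d)"
    by (simp add: inner_vec_def laplacian_mult_vec_nth sum_distrib_left if_distrib cong: if_cong)
  have swapped: "(\<Sum>c\<in>UNIV. \<Sum>d\<in>UNIV. ?S c d) =
      (\<Sum>c\<in>UNIV. \<Sum>d\<in>UNIV. if E c d then v $ d * (v $ d - v $ c) else 0)"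
    unfolding sum.swap[of ?S UNIV UNIV]
    using assms by (intro sum.cong refl) (auto dest: sympD)
  show ?thesis
    unfolding mult_2 form
    apply (subst (2) swapped)
    unfolding sum.distrib[symmetric]
    by (intro sum.cong refl) (auto simp: power2_eq_square algebra_simps)
qed

lemma laplacian_kernel_const_on_edge:
  assumes "symp E" and "laplacian E *v v = 0" and "E a b"
  shows "v $ a = v $ b"
proof -
  define f where "f c d = (if E c d then (v $ c - v $ d)\<^sup>2 else 0)" for c d
  have nonneg: "f c d \<ge> 0" for c d by (simp add: f_def)
  have "(\<Sum>c\<in>UNIV. \<Sum>d\<in>UNIV. f c d) = 0"
    using laplacian_quadratic_form[OF assms(1), of v] assms(2) by (simp add: f_def)
  then have "(\<Sum>d\<in>UNIV. f a d) = 0"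
    using nonneg by (simp add: sum_nonneg sum_nonneg_eq_0_iff)
  then have "f a b = 0"
    using nonneg by (simp add: sum_nonneg_eq_0_iff)
  then show ?thesis using \<open>E a b\<close> by (simp add: f_def)
qed

lemma laplacian_mult_vec_eq_0:
  assumes "\<And>c d. E c d \<Longrightarrow> v $ c = v $ d"
  shows "laplacian E *v v = 0"
  by (auto simp: vec_eq_iff laplacian_mult_vec_nth assms intro!: sum.neutral)

lemma laplacian_mult_vec_permute:
  assumes "graph_automorphism E \<sigma>"
  shows "laplacian E *v (\<chi> i. v $ \<sigma> i) = (\<chi> i. (laplacian E *v v) $ \<sigma> i)"
proof -
  have "bij \<sigma>" and edge: "\<And>x y. E x y \<longleftrightarrow> E (\<sigma> x) (\<sigma> y)"
    using assms unfolding graph_automorphism_def by auto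
  have "(laplacian E *v (\<chi> i. v $ \<sigma> i)) $ i =
        (\<Sum>j\<in>UNIV. if E (\<sigma> i) (\<sigma> j) then v $ \<sigma> i - v $ \<sigma> j else 0)" for i
    by (simp add: laplacian_mult_vec_nth edge[symmetric] cong: if_cong)
  also have "\<dots> i = (laplacian E *v v) $ \<sigma> i" for i
    using sum.reindex[of \<sigma> UNIV "\<lambda>k. if E (\<sigma> i) k then v $ \<sigma> i - v $ k else 0"] \<open>bij \<sigma>\<close>
    by (simp add: bij_is_inj bij_is_surj laplacian_mult_vec_nth)
  finally show ?thesis
    by (simp add: vec_eq_iff)
qed

lemma eigenspace_laplacian_permute:
  assumes "graph_automorphism E \<sigma>" and "v \<in> eigenspace (laplacian E) \<theta>"
  shows "(\<chi> i. v $ \<sigma> i) \<in> eigenspace (laplacian E) \<theta>"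
  using assms by (simp add: eigenspace_def laplacian_mult_vec_permute vec_eq_iff)

lemma edge_transitive_eigenvector_separates_edge:
  assumes "edge_transitive E" and "E a b"
    and "is_eigenvalue (laplacian E) \<theta>" and "\<theta> \<noteq> 0"
  shows "\<exists>w\<in>eigenspace (laplacian E) \<theta>. w $ a \<noteq> w $ b"
proof -
  obtain v where "v \<noteq> 0" and v: "v \<in> eigenspace (laplacian E) \<theta>"
    using assms(3) by (auto simp: is_eigenvalue_def eigenspace_def)
  have "laplacian E *v v \<noteq> 0"
    using v \<open>v \<noteq> 0\<close> \<open>\<theta> \<noteq> 0\<close> by (simp add: eigenspace_def)
  then obtain c d where "E c d" and "v $ c \<noteq> v $ d"
    using laplacian_mult_vec_eq_0 by blast
  obtain \<sigma> where \<sigma>: "graph_automorphism E \<sigma>" and "\<sigma> ` {a, b} = {c, d}"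
    using assms(1,2) \<open>E c d\<close> unfolding edge_transitive_def by metis
  then have "v $ \<sigma> a \<noteq> v $ \<sigma> b"
    using \<open>v $ c \<noteq> v $ d\<close> by (auto simp: doubleton_eq_iff)
  then show ?thesis
    using eigenspace_laplacian_permute[OF \<sigma> v] by force
qed

theorem mainTheorem13:
  fixes E :: "'n::finite \<Rightarrow> 'n \<Rightarrow> bool"
  assumes "simple_graph E"
    and "graph_connected E"
    and "edge_transitive E"
    and "E a b"
  shows "eigenvalue_support (laplacian E) (axis a 1 - axis b 1)
           = {\<theta>. is_eigenvalue (laplacian E) \<theta> \<and> \<theta> \<noteq> 0}"
proof -
  have "symp E" using assms(1) by (auto simp: simple_graph_def intro: sympI)
  have "\<theta> \<noteq> 0" if "v \<in> eigenspace (laplacian E) \<theta>" and "v $ a \<noteq> v $ b" for v \<theta>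
    using that laplacian_kernel_const_on_edge[OF \<open>symp E\<close> _ assms(4)]
    by (auto simp: eigenspace_def)
  then show ?thesis
    unfolding eigenvalue_support_axis_diff
    using edge_transitive_eigenvector_separates_edge[OF assms(3,4)] by blast
qed

end
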